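(* Let $X$ be a BN with full support on the DAG $\mathcal G$ with states $\mathcal A$, $f:\mathcal A\to\mathcal B$ a surjection and $U_v=f(X_v)$. Suppose that for all $v\in V_p$, all $w,\tilde w\in\mathcal A^{pa(v)}$ with $f(w)=f(\tilde w)$ and all $b\in\mathcal B$, $$\mathbb P(U_v=b\mid X_{pa(v)}=w)=\mathbb P(U_v=b\mid X_{pa(v)}=\tilde w).$$ Then (D3) holds, and for every $v$ with $depth(v)\ge1$, every $w\in\mathcal A^{pa(v)}$, every $b\in\mathcal B$ and every initial distribution $\alpha$ with $\mathbb P_\alpha(U_{pa(v)}=f(w))>0$, $$\mathbb P_\alpha(U_v=b\mid U_{pa(v)}=f(w))=\mathbb P(U_v=b\mid X_{pa(v)}=w).$$
   Context: $\mathcal G=(V,E)$ is a finite DAG; $pa(v)$ parents; $V_s$ parentless vertices, $V_p=V\setminus V_s$; $depth(v)$ maximal number of edges of a directed path from a vertex of $V_s$ to $v$. A BN on $\mathcal G$ with states $\mathcal A$ (finite) is specified by distributions $\alpha_v$ on $\mathcal A$ for $v\in V_s$ and CPDs $P_v(\cdot\mid a_{pa(v)})$ for $v\in V_p$; law $\prod_{v\in V_s}\alpha_v(x_v)\prod_{v\in V_p}P_v(x_v\mid x_{pa(v)})$; full support: all $x\in\mathcal A^V$ have positive probability (so $\mathbb P(X_v=c\mid X_{pa(v)}=w)=P_v(c\mid w)$, and $\mathbb P(U_v=b\mid X_{pa(v)}=w)=\sum_{c\in f^{-1}(b)}P_v(c\mid w)$). $\mathbb P_\alpha$ is the law with the same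 CPDs and initial distribution $\alpha$. $f$ applied coordinatewise. (D3): for every initial distribution $\tilde\alpha$, $(U_v)$ under $\mathbb P_{\tilde\alpha}$ factorises over $\mathcal G$ (law of form $\prod_vq_v(u_v\mid u_{pa(v)})$), and for every $v\in V_p$, $b_v$, $b_{pa(v)}$ the value $\mathbb P_{\tilde\alpha}(U_v=b_v\mid U_{pa(v)}=b_{pa(v)})$ is the same for all $\tilde\alpha$ with $\mathbb P_{\tilde\alpha}(U_{pa(v)}=b_{pa(v)})>0$. *)

theory Defs
  imports Complex_Main "HOL-Library.FuncSet"
begin

definition is_dag :: "'v set \<Rightarrow> ('v \<times> 'v) set \<Rightarrow> bool" where
  "is_dag V E \<longleftrightarrow> finite V \<and> E \<subseteq> V \<times> V \<and> acyclic E"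

definition pa :: "('v \<times> 'v) set \<Rightarrow> 'v \<Rightarrow> 'v set" where
  "pa E v = {u. (u, v) \<in> E}"

definition sources :: "'v set \<Rightarrow> ('v \<times> 'v) set \<Rightarrow> 'v set" where
  "sources V E = {v \<in> V. pa E v = {}}"

definition nonsources :: "'v set \<Rightarrow> ('v \<times> 'v) set \<Rightarrow> 'v set" where
  "nonsources V E = V - sources V E"

definition dpath :: "('v \<times> 'v) set \<Rightarrow> 'v list \<Rightarrow> bool" where
  "dpath E xs \<longleftrightarrow> (\<forall>i. Suc i < length xs \<longrightarrow> (xs ! i, xs ! Suc i) \<in> E)"

definition depth :: "'v set \<Rightarrow> ('v \<times> 'v) set \<Rightarrow> 'v \<Rightarrow> nat" where
  "depth V E v = Max {length xs - 1 | xs. xs \<noteq> [] \<and> hd xs \<in> sources V E \<and> last xs = v \<and> dpath E xs}"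

definition configs :: "'v set \<Rightarrow> ('v \<Rightarrow> 'a) set" where
  "configs S = PiE S (\<lambda>_. UNIV)"

definition is_init :: "'v set \<Rightarrow> ('v \<times> 'v) set \<Rightarrow> ('v \<Rightarrow> 'a::finite \<Rightarrow> real) \<Rightarrow> bool" where
  "is_init V E \<alpha> \<longleftrightarrow> (\<forall>v \<in> sources V E. (\<forall>a. \<alpha> v a \<ge> 0) \<and> sum (\<alpha> v) UNIV = 1)"

text \<open>CPDs: P v w c = P_v(c | w) for v non-source and w a configuration of pa(v).\<close>
definition is_cpds :: "'v set \<Rightarrow> ('v \<times> 'v) set \<Rightarrow> ('v \<Rightarrow> ('v \<Rightarrow> 'a) \<Rightarrow> 'a::finite \<Rightarrow> real) \<Rightarrow> bool" where
  "is_cpds V E P \<longleftrightarrow> (\<forall>v \<in> nonsources V E. \<forall>w \<in> configs (pa E v).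
      (\<forall>c. P v w c \<ge> 0) \<and> sum (P v w) UNIV = 1)"

definition joint :: "'v set \<Rightarrow> ('v \<times> 'v) set \<Rightarrow> ('v \<Rightarrow> 'a \<Rightarrow> real)
    \<Rightarrow> ('v \<Rightarrow> ('v \<Rightarrow> 'a) \<Rightarrow> 'a \<Rightarrow> real) \<Rightarrow> ('v \<Rightarrow> 'a) \<Rightarrow> real" where
  "joint V E \<alpha> P x = (\<Prod>v \<in> sources V E. \<alpha> v (x v)) *
                      (\<Prod>v \<in> nonsources V E. P v (restrict x (pa E v)) (x v))"

definition prb :: "'v set \<Rightarrow> ('v \<times> 'v) set \<Rightarrow> ('v \<Rightarrow> 'a \<Rightarrow> real)
    \<Rightarrow> ('v \<Rightarrow> ('v \<Rightarrow> 'a) \<Rightarrow> 'a \<Rightarrow> real) \<Rightarrow> (('v \<Rightarrow> 'a) \<Rightarrow> bool) \<Rightarrow> real" where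
  "prb V E \<alpha> P S = (\<Sum>x \<in> {x \<in> configs V. S x}. joint V E \<alpha> P x)"

definition cprb :: "'v set \<Rightarrow> ('v \<times> 'v) set \<Rightarrow> ('v \<Rightarrow> 'a \<Rightarrow> real)
    \<Rightarrow> ('v \<Rightarrow> ('v \<Rightarrow> 'a) \<Rightarrow> 'a \<Rightarrow> real) \<Rightarrow> (('v \<Rightarrow> 'a) \<Rightarrow> bool) \<Rightarrow> (('v \<Rightarrow> 'a) \<Rightarrow> bool) \<Rightarrow> real" where
  "cprb V E \<alpha> P S T = prb V E \<alpha> P (\<lambda>x. S x \<and> T x) / prb V E \<alpha> P T"

definition full_support :: "'v set \<Rightarrow> ('v \<times> 'v) set \<Rightarrow> ('v \<Rightarrow> 'a \<Rightarrow> real)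
    \<Rightarrow> ('v \<Rightarrow> ('v \<Rightarrow> 'a) \<Rightarrow> 'a \<Rightarrow> real) \<Rightarrow> bool" where
  "full_support V E \<alpha> P \<longleftrightarrow> (\<forall>x \<in> configs V. joint V E \<alpha> P x > 0)"

definition factorises :: "'v set \<Rightarrow> ('v \<times> 'v) set \<Rightarrow> (('v \<Rightarrow> 'b::finite) \<Rightarrow> real) \<Rightarrow> bool" where
  "factorises V E law \<longleftrightarrow> (\<exists>q :: 'v \<Rightarrow> ('v \<Rightarrow> 'b) \<Rightarrow> 'b \<Rightarrow> real.
      (\<forall>v \<in> V. \<forall>w \<in> configs (pa E v). (\<forall>b. q v w b \<ge> 0) \<and> sum (q v w) UNIV = 1) \<and>
      (\<forall>u \<in> configs V. law u = (\<Prod>v \<in> V. q v (restrict u (pa E v)) (u v))))"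

definition D3 :: "'v set \<Rightarrow> ('v \<times> 'v) set \<Rightarrow> ('v \<Rightarrow> ('v \<Rightarrow> 'a::finite) \<Rightarrow> 'a \<Rightarrow> real)
    \<Rightarrow> ('a \<Rightarrow> 'b::finite) \<Rightarrow> bool" where
  "D3 V E P f \<longleftrightarrow>
    (\<forall>\<alpha>'. is_init V E \<alpha>' \<longrightarrow>
        factorises V E (\<lambda>u. prb V E \<alpha>' P (\<lambda>x. \<forall>v \<in> V. f (x v) = u v))) \<and>
    (\<forall>v \<in> nonsources V E. \<forall>bv. \<forall>bpa \<in> configs (pa E v). \<forall>\<alpha>1 \<alpha>2.
        is_init V E \<alpha>1 \<and> is_init V E \<alpha>2 \<and>
        prb V E \<alpha>1 P (\<lambda>x. \<forall>u \<in> pa E v. f (x u) = bpa u) > 0 \<and>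
        prb V E \<alpha>2 P (\<lambda>x. \<forall>u \<in> pa E v. f (x u) = bpa u) > 0 \<longrightarrow>
        cprb V E \<alpha>1 P (\<lambda>x. f (x v) = bv) (\<lambda>x. \<forall>u \<in> pa E v. f (x u) = bpa u) =
        cprb V E \<alpha>2 P (\<lambda>x. f (x v) = bv) (\<lambda>x. \<forall>u \<in> pa E v. f (x u) = bpa u))"

end

theory Submission
  imports Defs
begin

text \<open>
  The joint law is a product of one local factor per vertex. Summing out a vertex that has no
  children inside the current vertex set removes its factor, because its CPD sums to one; peeling
  off such vertices marginalises the law onto any ancestral set. Marginalising onto the ancestors
  of v shows that P_alpha(f(X_v) = b, T(X_pa(v))) is a mixture, over the parent configurations w
  satisfying T, of the lumped CPDs sum_{f c = b} P_v(c | w). Under the hypothesis these depend on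
  w only through f(w), so conditioning on U_pa(v) = f(w) returns their common value whatever the
  initial distribution is. The same peeling, now summing each removed vertex over a fibre of f,
  factorises the law of U into these lumped kernels.
\<close>

lemma sum_configs_remove:
  fixes F :: "('v \<Rightarrow> 'a::finite) \<Rightarrow> 'c::comm_monoid_add"
  assumes "m \<in> W"
  shows "(\<Sum>x\<in>configs W. F x) = (\<Sum>x\<in>configs (W - {m}). \<Sum>c\<in>UNIV. F (x(m := c)))"
proof -
  define h :: "'a \<times> ('v \<Rightarrow> 'a) \<Rightarrow> ('v \<Rightarrow> 'a)" where "h = (\<lambda>(c, x). x(m := c))"
  have W: "W = insert m (W - {m})" using assms by blast
  have image: "configs W = h ` (UNIV \<times> configs (W - {m}))"
    unfolding configs_def h_def by (subst W, subst PiE_insert_eq) simp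
  have inj: "inj_on h (UNIV \<times> configs (W - {m}))"
    unfolding configs_def h_def using inj_combinator[of m "W - {m}" "\<lambda>_. UNIV"] by simp
  have "(\<Sum>x\<in>configs W. F x) = (\<Sum>(c, x)\<in>UNIV \<times> configs (W - {m}). F (x(m := c)))"
    unfolding image sum.reindex[OF inj] by (simp add: h_def case_prod_beta comp_def)
  also have "\<dots> = (\<Sum>x\<in>configs (W - {m}). \<Sum>c\<in>UNIV. F (x(m := c)))"
    unfolding sum.cartesian_product[symmetric] by (rule sum.swap)
  finally show ?thesis .
qed

lemma restrict_eq_iff_configs: "w \<in> configs S \<Longrightarrow> restrict x S = w \<longleftrightarrow> (\<forall>u\<in>S. x u = w u)"
  unfolding configs_def by (auto simp: fun_eq_iff restrict_def PiE_iff extensional_def)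

lemma restrict_in_configs: "restrict x S \<in> configs S"
  by (simp add: configs_def)

lemma restrict_fun_upd_notin: "m \<notin> S \<Longrightarrow> restrict (x(m := c)) S = restrict x S"
  by (auto simp: restrict_def fun_eq_iff)

lemma finite_acyclic_obtains_sink:
  assumes "finite E" "acyclic E" "S \<noteq> {}"
  obtains m where "m \<in> S" "\<forall>u\<in>S. (m, u) \<notin> E"
proof -
  have "wf (E\<inverse>)" by (rule finite_acyclic_wf_converse[OF assms(1,2)])
  then obtain m where "m \<in> S" "\<And>u. (u, m) \<in> E\<inverse> \<Longrightarrow> u \<notin> S"
    using wfE_min assms(3) by (metis ex_in_conv)
  then show ?thesis using that by blast
qed

lemma depth_eq_0_if_no_parents:
  assumes "v \<in> V" "pa E v = {}"
  shows "depth V E v = 0"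
proof -
  have "length xs - 1 = 0" if "xs \<noteq> []" "last xs = v" "dpath E xs" for xs
  proof (rule ccontr)
    assume "length xs - 1 \<noteq> 0"
    then have "Suc (length xs - 2) = length xs - 1" by arith
    then have "Suc (length xs - 2) < length xs" "xs ! Suc (length xs - 2) = v"
      using that by (auto simp: last_conv_nth)
    then have "xs ! (length xs - 2) \<in> pa E v"
      using \<open>dpath E xs\<close> by (force simp: dpath_def pa_def)
    then show False using assms(2) by simp
  qed
  moreover have "[v] \<noteq> [] \<and> hd [v] \<in> sources V E \<and> last [v] = v \<and> dpath E [v]"
    using assms by (simp add: sources_def dpath_def)
  ultimately have "{length xs - 1 | xs. xs \<noteq> [] \<and> hd xs \<in> sources V E \<and> last xs = v \<and> dpath E xs} = {0}"
    by (auto intro!: exI[of _ "[v]"])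
  then show ?thesis unfolding depth_def by simp
qed

definition ancestors :: "('v \<times> 'v) set \<Rightarrow> 'v \<Rightarrow> 'v set" where
  "ancestors E v = {u. (u, v) \<in> E\<^sup>+}"

definition ancestral :: "('v \<times> 'v) set \<Rightarrow> 'v set \<Rightarrow> bool" where
  "ancestral E A \<longleftrightarrow> (\<forall>u\<in>A. pa E u \<subseteq> A)"

lemma ancestral_insert_ancestors: "ancestral E (insert v (ancestors E v))"
  unfolding ancestral_def ancestors_def pa_def by (auto intro: trancl_into_trancl2)

lemma ancestral_remove_sink: "ancestral E W \<Longrightarrow> \<forall>u\<in>W. (m, u) \<notin> E \<Longrightarrow> ancestral E (W - {m})"
  unfolding ancestral_def pa_def by blast

locale bayes_net =
  fixes V :: "'v set" and E :: "('v \<times> 'v) set" and P :: "'v \<Rightarrow> ('v \<Rightarrow> 'a::finite) \<Rightarrow> 'a \<Rightarrow> real"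
  assumes dag: "is_dag V E" and cpds: "is_cpds V E P"
begin

lemma finite_V: "finite V" and edges_subset: "E \<subseteq> V \<times> V" and acyclic_E: "acyclic E"
  using dag by (auto simp: is_dag_def)

lemma finite_E: "finite E"
  using finite_subset[OF edges_subset] finite_V by blast

lemma finite_configs_V: "finite (configs V :: ('v \<Rightarrow> 'a) set)"
  unfolding configs_def using finite_V by (simp add: finite_PiE)

lemma parents_subset: "pa E v \<subseteq> V"
  using edges_subset by (auto simp: pa_def)

lemma sum_cpd: "v \<in> nonsources V E \<Longrightarrow> w \<in> configs (pa E v) \<Longrightarrow> sum (P v w) UNIV = 1"
  and cpd_nonneg: "v \<in> nonsources V E \<Longrightarrow> w \<in> configs (pa E v) \<Longrightarrow> P v w c \<ge> 0"
  using cpds by (auto simp: is_cpds_def)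

lemma nonsources_iff: "v \<in> nonsources V E \<longleftrightarrow> v \<in> V \<and> pa E v \<noteq> {}"
  and sources_iff: "v \<in> sources V E \<longleftrightarrow> v \<in> V \<and> pa E v = {}"
  by (auto simp: nonsources_def sources_def)

definition factor :: "('v \<Rightarrow> 'a \<Rightarrow> real) \<Rightarrow> 'v \<Rightarrow> ('v \<Rightarrow> 'a) \<Rightarrow> real" where
  "factor \<alpha> u x = (if pa E u = {} then \<alpha> u (x u) else P u (restrict x (pa E u)) (x u))"

lemma joint_eq_prod_factor: "joint V E \<alpha> P x = (\<Prod>u\<in>V. factor \<alpha> u x)"
proof -
  have "V = sources V E \<union> nonsources V E" "sources V E \<inter> nonsources V E = {}"
    "finite (sources V E)" "finite (nonsources V E)"
    using finite_V by (auto simp: sources_def nonsources_def)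
  then have "(\<Prod>u\<in>V. factor \<alpha> u x)
      = (\<Prod>u\<in>sources V E. factor \<alpha> u x) * (\<Prod>u\<in>nonsources V E. factor \<alpha> u x)"
    by (metis prod.union_disjoint)
  also have "\<dots> = joint V E \<alpha> P x"
    unfolding joint_def
    by (intro arg_cong2[where f = "(*)"] prod.cong) (auto simp: factor_def sources_iff nonsources_iff)
  finally show ?thesis by simp
qed

lemma prb_eq_sum_prod_factor:
  "prb V E \<alpha> P S = (\<Sum>x\<in>configs V. (\<Prod>u\<in>V. factor \<alpha> u x) * of_bool (S x))"
proof -
  have "{x \<in> configs V. S x} = configs V \<inter> {x. S x}" by blast
  then show ?thesis
    unfolding prb_def joint_eq_prod_factor by (simp add: finite_configs_V)
qed

lemma prb_pos_if_full_support:
  assumes "full_support V E \<alpha> P" "x \<in> configs V" "S x"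
  shows "prb V E \<alpha> P S > 0"
  unfolding prb_def
proof (rule sum_pos)
  show "finite {x \<in> configs V. S x}" using finite_configs_V by simp
  show "{x \<in> configs V. S x} \<noteq> {}" using assms(2,3) by blast
qed (use assms(1) in \<open>auto simp: full_support_def\<close>)

lemma factor_fun_upd_other: "u \<noteq> m \<Longrightarrow> m \<notin> pa E u \<Longrightarrow> factor \<alpha> u (x(m := c)) = factor \<alpha> u x"
  by (simp add: factor_def restrict_fun_upd_notin)

lemma factor_fun_upd_self:
  "(m, m) \<notin> E \<Longrightarrow>
    factor \<alpha> m (x(m := c)) = (if pa E m = {} then \<alpha> m c else P m (restrict x (pa E m)) c)"
  by (simp add: factor_def restrict_fun_upd_notin pa_def)

lemma sum_factor_fun_upd:
  assumes "is_init V E \<alpha>" "m \<in> V" "(m, m) \<notin> E"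
  shows "(\<Sum>c\<in>UNIV. factor \<alpha> m (x(m := c))) = 1"
  using assms sum_cpd[of m "restrict x (pa E m)"]
  by (cases "pa E m = {}")
    (auto simp: factor_fun_upd_self is_init_def sources_iff nonsources_iff configs_def)

lemma sum_prod_factor_remove_sink:
  assumes "finite W" "m \<in> W" "\<forall>u\<in>W. (m, u) \<notin> E"
  shows "(\<Sum>x\<in>configs W. (\<Prod>u\<in>W. factor \<alpha> u x) * h x) =
    (\<Sum>x\<in>configs (W - {m}). (\<Prod>u\<in>W - {m}. factor \<alpha> u x) *
      (\<Sum>c\<in>UNIV. factor \<alpha> m (x(m := c)) * h (x(m := c))))"
proof -
  have "(\<Prod>u\<in>W. factor \<alpha> u (x(m := c))) =
      factor \<alpha> m (x(m := c)) * (\<Prod>u\<in>W - {m}. factor \<alpha> u x)" for x c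
  proof -
    have "(\<Prod>u\<in>W - {m}. factor \<alpha> u (x(m := c))) = (\<Prod>u\<in>W - {m}. factor \<alpha> u x)"
      using assms(3) by (intro prod.cong) (auto simp: factor_fun_upd_other pa_def)
    then show ?thesis by (simp only: prod.remove[OF assms(1,2)])
  qed
  then show ?thesis
    unfolding sum_configs_remove[OF assms(2)] by (simp add: sum_distrib_left mult_ac)
qed

lemma sum_prod_factor_marginal:
  assumes init: "is_init V E \<alpha>" and anc: "ancestral E A" and "A \<subseteq> W" "W \<subseteq> V"
  shows "(\<Sum>x\<in>configs W. (\<Prod>u\<in>W. factor \<alpha> u x) * g (restrict x A)) =
    (\<Sum>y\<in>configs A. (\<Prod>u\<in>A. factor \<alpha> u y) * g y)"
  using assms(3,4)
proof (induction "card (W - A)" arbitrary: W)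
  case 0
  have "finite (W - A)" using 0 finite_V finite_subset by blast
  then have "W = A" using 0 by auto
  then show ?case by (auto intro!: sum.cong simp: configs_def)
next
  case (Suc n)
  have fin: "finite W" using Suc.prems finite_V finite_subset by blast
  have "W - A \<noteq> {}" using Suc.hyps(2) by (metis card.empty nat.simps(3))
  then obtain m where m: "m \<in> W - A" and sink: "\<forall>u\<in>W - A. (m, u) \<notin> E"
    by (rule finite_acyclic_obtains_sink[OF finite_E acyclic_E])
  have sink_W: "\<forall>u\<in>W. (m, u) \<notin> E"
    using sink m anc by (auto simp: ancestral_def pa_def)
  have mV: "m \<in> V" and mm: "(m, m) \<notin> E" using m sink Suc.prems by auto
  have "(\<Sum>c\<in>UNIV. factor \<alpha> m (x(m := c)) * g (restrict (x(m := c)) A))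
      = (\<Sum>c\<in>UNIV. factor \<alpha> m (x(m := c))) * g (restrict x A)" for x
    using m by (simp add: restrict_fun_upd_notin sum_distrib_right)
  then have "(\<Sum>x\<in>configs W. (\<Prod>u\<in>W. factor \<alpha> u x) * g (restrict x A)) =
      (\<Sum>x\<in>configs (W - {m}). (\<Prod>u\<in>W - {m}. factor \<alpha> u x) * g (restrict x A))"
    using sum_prod_factor_remove_sink[OF fin _ sink_W] m sum_factor_fun_upd[OF init mV mm] by simp
  also have "\<dots> = (\<Sum>y\<in>configs A. (\<Prod>u\<in>A. factor \<alpha> u y) * g y)"
  proof (rule Suc.hyps(1))
    have "W - {m} - A = (W - A) - {m}" by auto
    then show "n = card (W - {m} - A)" using Suc.hyps(2) m fin by simp
  qed (use Suc.prems m in auto)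
  finally show ?case .
qed

definition lumped_cpd :: "('a \<Rightarrow> 'b) \<Rightarrow> 'v \<Rightarrow> ('v \<Rightarrow> 'a) \<Rightarrow> 'b \<Rightarrow> real" where
  "lumped_cpd f v w b = sum (P v w) {c. f c = b}"

definition lumpable :: "('a \<Rightarrow> 'b) \<Rightarrow> bool" where
  "lumpable f \<longleftrightarrow> (\<forall>v\<in>nonsources V E. \<forall>w\<in>configs (pa E v). \<forall>w'\<in>configs (pa E v).
      (\<forall>u\<in>pa E v. f (w u) = f (w' u)) \<longrightarrow> lumped_cpd f v w = lumped_cpd f v w')"

lemma prb_local_event:
  assumes init: "is_init V E \<alpha>" and v: "v \<in> nonsources V E"
  shows "prb V E \<alpha> P (\<lambda>x. H (x v) (restrict x (pa E v))) =
    (\<Sum>y\<in>configs (ancestors E v). (\<Prod>u\<in>ancestors E v. factor \<alpha> u y) *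
      (\<Sum>c\<in>UNIV. P v (restrict y (pa E v)) c * of_bool (H c (restrict y (pa E v)))))"
proof -
  define A where "A = insert v (ancestors E v)"
  have anc: "ancestral E A" unfolding A_def by (rule ancestral_insert_ancestors)
  have not_anc: "v \<notin> ancestors E v" and sink: "\<forall>u\<in>A. (v, u) \<notin> E"
    using acyclic_E unfolding A_def ancestors_def acyclic_def by (auto intro: trancl_into_trancl2)
  have pa_anc: "pa E v \<subseteq> ancestors E v" unfolding ancestors_def pa_def by auto
  have A_V: "A \<subseteq> V"
    unfolding A_def ancestors_def using v trancl_subset_Sigma[OF edges_subset]
    by (auto simp: nonsources_iff)
  have fin: "finite A" using A_V finite_V finite_subset by blast
  define G where "G y = (of_bool (H (y v) (restrict y (pa E v))) :: real)" for y :: "'v \<Rightarrow> 'a"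
  have "G (restrict x A) = of_bool (H (x v) (restrict x (pa E v)))" for x
    using pa_anc by (simp add: G_def A_def Int_absorb1 subset_insertI2)
  then have "prb V E \<alpha> P (\<lambda>x. H (x v) (restrict x (pa E v))) =
      (\<Sum>x\<in>configs V. (\<Prod>u\<in>V. factor \<alpha> u x) * G (restrict x A))"
    by (simp add: prb_eq_sum_prod_factor)
  also have "\<dots> = (\<Sum>y\<in>configs A. (\<Prod>u\<in>A. factor \<alpha> u y) * G y)"
    by (rule sum_prod_factor_marginal[OF init anc A_V order_refl])
  also have "\<dots> = (\<Sum>y\<in>configs (A - {v}). (\<Prod>u\<in>A - {v}. factor \<alpha> u y) *
      (\<Sum>c\<in>UNIV. factor \<alpha> v (y(v := c)) * G (y(v := c))))"
    by (rule sum_prod_factor_remove_sink[OF fin _ sink]) (simp add: A_def)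
  also have "\<dots> = (\<Sum>y\<in>configs (ancestors E v). (\<Prod>u\<in>ancestors E v. factor \<alpha> u y) *
      (\<Sum>c\<in>UNIV. P v (restrict y (pa E v)) c * of_bool (H c (restrict y (pa E v)))))"
  proof -
    have "v \<notin> pa E v" "(v, v) \<notin> E" "pa E v \<noteq> {}"
      using pa_anc not_anc v by (auto simp: nonsources_iff pa_def)
    then have "factor \<alpha> v (y(v := c)) * G (y(v := c)) =
        P v (restrict y (pa E v)) c * of_bool (H c (restrict y (pa E v)))" for y c
      by (simp add: G_def factor_fun_upd_self restrict_fun_upd_notin)
    moreover have "A - {v} = ancestors E v" using not_anc by (simp add: A_def)
    ultimately show ?thesis by (simp only:)
  qed
  finally show ?thesis .
qed

lemma prb_lumped_vertex_and_parents:
  assumes init: "is_init V E \<alpha>" and v: "v \<in> nonsources V E"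
    and q: "\<forall>w\<in>configs (pa E v). T w \<longrightarrow> lumped_cpd f v w b = q"
  shows "prb V E \<alpha> P (\<lambda>x. f (x v) = b \<and> T (restrict x (pa E v))) =
    q * prb V E \<alpha> P (\<lambda>x. T (restrict x (pa E v)))"
proof -
  have local: "(\<Sum>c\<in>UNIV. P v w c * of_bool (f c = b \<and> T w)) =
      q * (\<Sum>c\<in>UNIV. P v w c * of_bool (T w))" if w: "w \<in> configs (pa E v)" for w
  proof (cases "T w")
    case True
    then have "(\<Sum>c\<in>UNIV. P v w c * of_bool (f c = b \<and> T w)) = lumped_cpd f v w b"
      by (simp add: lumped_cpd_def)
    then show ?thesis using True q w sum_cpd[OF v w] by simp
  qed simp
  show ?thesis
    unfolding prb_local_event[OF init v, where H = "\<lambda>c w. f c = b \<and> T w"]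
      prb_local_event[OF init v, where H = "\<lambda>c w. T w"]
      sum_distrib_left[where A = "configs (ancestors E v)"]
    by (intro sum.cong refl) (simp only: local[OF restrict_in_configs] mult_ac)
qed

lemma cprb_parents_eq_lumped_cpd:
  assumes init: "is_init V E \<alpha>" and full: "full_support V E \<alpha> P"
    and v: "v \<in> nonsources V E" and w: "w \<in> configs (pa E v)"
  shows "cprb V E \<alpha> P (\<lambda>x. f (x v) = b) (\<lambda>x. \<forall>u\<in>pa E v. x u = w u) = lumped_cpd f v w b"
proof -
  have event: "(\<lambda>x. \<forall>u\<in>pa E v. x u = w u) = (\<lambda>x. restrict x (pa E v) = w)"
    using restrict_eq_iff_configs[OF w] by auto
  have "restrict w V \<in> configs V" "\<forall>u\<in>pa E v. restrict w V u = w u"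
    using parents_subset by (auto simp: configs_def)
  then have "prb V E \<alpha> P (\<lambda>x. \<forall>u\<in>pa E v. x u = w u) > 0"
    by (rule prb_pos_if_full_support[OF full])
  then show ?thesis
    using prb_lumped_vertex_and_parents[OF init v, of "\<lambda>w'. w' = w" f b "lumped_cpd f v w b"]
    unfolding cprb_def event by simp
qed

lemma lumpable_if_cprb_parents_invariant:
  assumes init: "is_init V E \<alpha>" and full: "full_support V E \<alpha> P"
    and inv: "\<forall>v\<in>nonsources V E. \<forall>w\<in>configs (pa E v). \<forall>w'\<in>configs (pa E v).
      (\<forall>u\<in>pa E v. f (w u) = f (w' u)) \<longrightarrow> (\<forall>b.
        cprb V E \<alpha> P (\<lambda>x. f (x v) = b) (\<lambda>x. \<forall>u\<in>pa E v. x u = w u) =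
        cprb V E \<alpha> P (\<lambda>x. f (x v) = b) (\<lambda>x. \<forall>u\<in>pa E v. x u = w' u))"
  shows "lumpable f"
  unfolding lumpable_def
proof (intro ballI impI ext)
  fix v w w' b
  assume v: "v \<in> nonsources V E" and w: "w \<in> configs (pa E v)" "w' \<in> configs (pa E v)"
    and "\<forall>u\<in>pa E v. f (w u) = f (w' u)"
  then show "lumped_cpd f v w b = lumped_cpd f v w' b"
    using inv[rule_format, OF v w]
    by (simp only: cprb_parents_eq_lumped_cpd[OF init full v w(1)]
        cprb_parents_eq_lumped_cpd[OF init full v w(2)])
qed

lemma cprb_lumped_parents:
  assumes init: "is_init V E \<alpha>" and lump: "lumpable f" and v: "v \<in> nonsources V E"
    and w: "w \<in> configs (pa E v)" and bpa: "\<forall>u\<in>pa E v. f (w u) = bpa u"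
    and pos: "prb V E \<alpha> P (\<lambda>x. \<forall>u\<in>pa E v. f (x u) = bpa u) > 0"
  shows "cprb V E \<alpha> P (\<lambda>x. f (x v) = b) (\<lambda>x. \<forall>u\<in>pa E v. f (x u) = bpa u) = lumped_cpd f v w b"
proof -
  define T where "T w' \<longleftrightarrow> (\<forall>u\<in>pa E v. f (w' u) = bpa u)" for w' :: "'v \<Rightarrow> 'a"
  have event: "(\<lambda>x. \<forall>u\<in>pa E v. f (x u) = bpa u) = (\<lambda>x. T (restrict x (pa E v)))"
    unfolding T_def by auto
  have "\<forall>w'\<in>configs (pa E v). T w' \<longrightarrow> lumped_cpd f v w' b = lumped_cpd f v w b"
    using lump v w bpa unfolding lumpable_def T_def by metis
  then have "prb V E \<alpha> P (\<lambda>x. f (x v) = b \<and> T (restrict x (pa E v))) =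
      lumped_cpd f v w b * prb V E \<alpha> P (\<lambda>x. T (restrict x (pa E v)))"
    by (rule prb_lumped_vertex_and_parents[OF init v])
  then show ?thesis using pos unfolding cprb_def event by simp
qed

text \<open>
  The kernel of \<open>U\<^sub>v\<close> given \<open>U\<^sub>p\<^sub>a\<^sub>(\<^sub>v\<^sub>) = u\<close>, evaluated at the representative \<open>inv f \<circ> u\<close> of
  \<open>u\<close>; for lumpable \<open>f\<close> every other representative gives the same value.
\<close>

definition lumped_kernel :: "('v \<Rightarrow> 'a \<Rightarrow> real) \<Rightarrow> ('a \<Rightarrow> 'b) \<Rightarrow> 'v \<Rightarrow> ('v \<Rightarrow> 'b) \<Rightarrow> 'b \<Rightarrow> real" where
  "lumped_kernel \<alpha> f v u b =
    (if pa E v = {} then sum (\<alpha> v) {c. f c = b}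
     else lumped_cpd f v (restrict (\<lambda>p. inv f (u p)) (pa E v)) b)"

lemma lumped_kernel_nonneg:
  assumes "is_init V E \<alpha>" "v \<in> V"
  shows "lumped_kernel \<alpha> f v u b \<ge> 0"
proof (cases "pa E v = {}")
  case True
  then show ?thesis
    using assms by (auto simp: lumped_kernel_def is_init_def sources_iff intro: sum_nonneg)
next
  case False
  then have "v \<in> nonsources V E" using assms(2) by (simp add: nonsources_iff)
  then show ?thesis
    using False cpd_nonneg[OF _ restrict_in_configs]
    by (simp add: lumped_kernel_def lumped_cpd_def sum_nonneg)
qed

lemma sum_lumped_kernel:
  fixes f :: "'a \<Rightarrow> 'b::finite"
  assumes "is_init V E \<alpha>" "v \<in> V"
  shows "(\<Sum>b\<in>UNIV. lumped_kernel \<alpha> f v u b) = 1"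
proof -
  have fibres: "(\<Sum>b\<in>UNIV. sum g {c. f c = b}) = sum g UNIV" for g :: "'a \<Rightarrow> real"
    using sum.group[of UNIV UNIV f g] by simp
  show ?thesis
    using assms sum_cpd[OF _ restrict_in_configs]
    by (cases "pa E v = {}")
      (auto simp: lumped_kernel_def lumped_cpd_def fibres is_init_def sources_iff nonsources_iff)
qed

lemma sum_factor_fibre:
  assumes surj: "surj f" and lump: "lumpable f" and m: "m \<in> V" "(m, m) \<notin> E"
    and x: "\<forall>p\<in>pa E m. f (x p) = u p"
  shows "(\<Sum>c | f c = b. factor \<alpha> m (x(m := c))) = lumped_kernel \<alpha> f m (restrict u (pa E m)) b"
proof (cases "pa E m = {}")
  case True
  then show ?thesis using m by (simp add: factor_fun_upd_self lumped_kernel_def)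
next
  case False
  then have "m \<in> nonsources V E" using m by (simp add: nonsources_iff)
  moreover define r where "r = restrict (\<lambda>p. inv f (restrict u (pa E m) p)) (pa E m)"
  moreover have "\<forall>p\<in>pa E m. f (restrict x (pa E m) p) = f (r p)"
    using x by (simp add: r_def surj_f_inv_f[OF surj])
  ultimately have "lumped_cpd f m (restrict x (pa E m)) = lumped_cpd f m r"
    using lump unfolding lumpable_def by (simp add: configs_def)
  then show ?thesis
    using False m unfolding lumped_kernel_def lumped_cpd_def r_def
    by (simp add: factor_fun_upd_self fun_eq_iff)
qed

lemma sum_prod_factor_lumped:
  assumes init: "is_init V E \<alpha>" and surj: "surj f" and lump: "lumpable f"
  shows "ancestral E W \<Longrightarrow> W \<subseteq> V \<Longrightarrow>
    (\<Sum>x\<in>configs W. (\<Prod>v\<in>W. factor \<alpha> v x) * of_bool (\<forall>v\<in>W. f (x v) = u v)) =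
    (\<Prod>v\<in>W. lumped_kernel \<alpha> f v (restrict u (pa E v)) (u v))"
proof (induction "card W" arbitrary: W)
  case 0
  then have "W = {}" using finite_subset[OF _ finite_V] by auto
  then show ?case by (simp add: configs_def)
next
  case (Suc n)
  have fin: "finite W" using Suc.prems finite_subset finite_V by blast
  have "W \<noteq> {}" using Suc.hyps(2) by (metis card.empty nat.simps(3))
  then obtain m where m: "m \<in> W" and sink: "\<forall>u\<in>W. (m, u) \<notin> E"
    by (rule finite_acyclic_obtains_sink[OF finite_E acyclic_E])
  have mV: "m \<in> V" and mm: "(m, m) \<notin> E" using m sink Suc.prems by auto
  have pa_m: "pa E m \<subseteq> W - {m}" using Suc.prems(1) m mm by (auto simp: ancestral_def pa_def)
  define k where "k = lumped_kernel \<alpha> f m (restrict u (pa E m)) (u m)"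
  have "(\<Sum>c\<in>UNIV. factor \<alpha> m (x(m := c)) * of_bool (\<forall>v\<in>W. f ((x(m := c)) v) = u v)) =
      of_bool (\<forall>v\<in>W - {m}. f (x v) = u v) * k" for x
  proof (cases "\<forall>v\<in>W - {m}. f (x v) = u v")
    case True
    then have "(\<forall>v\<in>W. f ((x(m := c)) v) = u v) \<longleftrightarrow> f c = u m" for c using m by auto
    moreover have "\<forall>p\<in>pa E m. f (x p) = u p" using True pa_m by blast
    ultimately show ?thesis
      using True sum_factor_fibre[OF surj lump mV mm] by (simp add: k_def Int_def)
  qed (auto intro!: sum.neutral)
  then have "(\<Sum>x\<in>configs W. (\<Prod>v\<in>W. factor \<alpha> v x) * of_bool (\<forall>v\<in>W. f (x v) = u v)) =
      k * (\<Sum>x\<in>configs (W - {m}).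
        (\<Prod>v\<in>W - {m}. factor \<alpha> v x) * of_bool (\<forall>v\<in>W - {m}. f (x v) = u v))"
    by (simp add: sum_prod_factor_remove_sink[OF fin m sink] sum_distrib_left mult_ac)
  also have "\<dots> = k * (\<Prod>v\<in>W - {m}. lumped_kernel \<alpha> f v (restrict u (pa E v)) (u v))"
  proof -
    have "n = card (W - {m})" using Suc.hyps(2) fin m by simp
    then show ?thesis
      using Suc.hyps(1) ancestral_remove_sink[OF Suc.prems(1) sink] Suc.prems(2) by auto
  qed
  also have "\<dots> = (\<Prod>v\<in>W. lumped_kernel \<alpha> f v (restrict u (pa E v)) (u v))"
    unfolding k_def by (rule prod.remove[OF fin m, symmetric])
  finally show ?case .
qed

lemma factorises_lumped_law:
  assumes init: "is_init V E \<alpha>" and surj: "surj f" and lump: "lumpable f"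
  shows "factorises V E (\<lambda>u. prb V E \<alpha> P (\<lambda>x. \<forall>v\<in>V. f (x v) = u v))"
  unfolding factorises_def
proof (intro exI[of _ "lumped_kernel \<alpha> f"] conjI ballI allI)
  have "ancestral E V" using parents_subset by (simp add: ancestral_def)
  then show "prb V E \<alpha> P (\<lambda>x. \<forall>v\<in>V. f (x v) = u v) =
      (\<Prod>v\<in>V. lumped_kernel \<alpha> f v (restrict u (pa E v)) (u v))" for u
    unfolding prb_eq_sum_prod_factor by (rule sum_prod_factor_lumped[OF init surj lump]) simp
qed (use init lumped_kernel_nonneg sum_lumped_kernel in auto)

lemma D3_if_lumpable:
  assumes surj: "surj f" and lump: "lumpable f"
  shows "D3 V E P f"
  unfolding D3_def
proof (intro conjI allI impI ballI factorises_lumped_law[OF _ surj lump])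
  fix v bv \<alpha>1 \<alpha>2 and bpa :: "'v \<Rightarrow> 'b"
  assume v: "v \<in> nonsources V E"
    and h: "is_init V E \<alpha>1 \<and> is_init V E \<alpha>2 \<and>
      prb V E \<alpha>1 P (\<lambda>x. \<forall>u\<in>pa E v. f (x u) = bpa u) > 0 \<and>
      prb V E \<alpha>2 P (\<lambda>x. \<forall>u\<in>pa E v. f (x u) = bpa u) > 0"
  define w where "w = restrict (\<lambda>u. inv f (bpa u)) (pa E v)"
  have w: "w \<in> configs (pa E v)" "\<forall>u\<in>pa E v. f (w u) = bpa u"
    by (auto simp: w_def configs_def surj_f_inv_f[OF surj])
  show "cprb V E \<alpha>1 P (\<lambda>x. f (x v) = bv) (\<lambda>x. \<forall>u\<in>pa E v. f (x u) = bpa u) =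
      cprb V E \<alpha>2 P (\<lambda>x. f (x v) = bv) (\<lambda>x. \<forall>u\<in>pa E v. f (x u) = bpa u)"
    using h cprb_lumped_parents[OF _ lump v w] by simp
qed

end

theorem mainTheorem11:
  fixes V :: "'v set" and E :: "('v \<times> 'v) set"
    and \<alpha> :: "'v \<Rightarrow> 'a::finite \<Rightarrow> real"
    and P :: "'v \<Rightarrow> ('v \<Rightarrow> 'a) \<Rightarrow> 'a \<Rightarrow> real"
    and f :: "'a \<Rightarrow> 'b::finite"
  assumes dag: "is_dag V E"
    and init: "is_init V E \<alpha>"
    and cpds: "is_cpds V E P"
    and full: "full_support V E \<alpha> P"
    and surj: "surj f"
    and lump: "\<forall>v \<in> nonsources V E. \<forall>w \<in> configs (pa E v). \<forall>w' \<in> configs (pa E v).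
        (\<forall>u \<in> pa E v. f (w u) = f (w' u)) \<longrightarrow> (\<forall>b.
          cprb V E \<alpha> P (\<lambda>x. f (x v) = b) (\<lambda>x. \<forall>u \<in> pa E v. x u = w u) =
          cprb V E \<alpha> P (\<lambda>x. f (x v) = b) (\<lambda>x. \<forall>u \<in> pa E v. x u = w' u))"
  shows "D3 V E P f \<and>
    (\<forall>v \<in> V. depth V E v \<ge> 1 \<longrightarrow> (\<forall>w \<in> configs (pa E v). \<forall>b. \<forall>\<alpha>'.
        is_init V E \<alpha>' \<and> prb V E \<alpha>' P (\<lambda>x. \<forall>u \<in> pa E v. f (x u) = f (w u)) > 0 \<longrightarrow>
        cprb V E \<alpha>' P (\<lambda>x. f (x v) = b) (\<lambda>x. \<forall>u \<in> pa E v. f (x u) = f (w u)) =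
        cprb V E \<alpha> P (\<lambda>x. f (x v) = b) (\<lambda>x. \<forall>u \<in> pa E v. x u = w u)))"
proof -
  interpret bayes_net V E P using dag cpds by unfold_locales
  have lumpable: "lumpable f" by (rule lumpable_if_cprb_parents_invariant[OF init full lump])
  show ?thesis
  proof (intro conjI D3_if_lumpable[OF surj lumpable] ballI impI allI)
    fix v w b \<alpha>'
    assume "v \<in> V" "depth V E v \<ge> 1" and w: "w \<in> configs (pa E v)"
      and h: "is_init V E \<alpha>' \<and> prb V E \<alpha>' P (\<lambda>x. \<forall>u \<in> pa E v. f (x u) = f (w u)) > 0"
    then have v: "v \<in> nonsources V E"
      using depth_eq_0_if_no_parents by (fastforce simp: nonsources_iff)
    show "cprb V E \<alpha>' P (\<lambda>x. f (x v) = b) (\<lambda>x. \<forall>u \<in> pa E v. f (x u) = f (w u)) =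
        cprb V E \<alpha> P (\<lambda>x. f (x v) = b) (\<lambda>x. \<forall>u \<in> pa E v. x u = w u)"
      using h cprb_lumped_parents[OF _ lumpable v w]
        cprb_parents_eq_lumped_cpd[OF init full v w, where f = f]
      by simp
  qed
qed

end
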